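(* Let $\lambda\in\mathbb Q\cup\{\infty\}$, $i\in\{1,2,3,6\}$ and $\ell\in\mathbb Z_{>0}$. Then: (a) if $d\in R^\lambda_\ell(i)$ then $R^\lambda_\ell(i)=\{\Phi^j(d)\mid j=1,\ldots,i\}$; (b) if $i>1$ and $i\mid\ell$ then $R^\lambda_\ell(i)=\emptyset$; (c) if $i>1$ and $i\nmid\ell$ then $R^\lambda_\ell(i)$ consists of exactly $i$ real roots; (d) $R^\lambda_\ell(1)=\{h_{a,b}\}$, where $a\in\mathbb N$, $b\in\mathbb Z$ satisfy $b/a=\lambda$ and $\gcd(a,b)=\ell$ (for $\lambda=\infty$: $a=0$, $b=\ell$).
   Context: Let $V=\{1_1,1_2,2_1,2_2,3_0,3_1,4_0,4_1,5_{-1},5_0\}$ and identify $\mathbb Z^{10}=\mathbb Z^V$. Let $A$ be the set of 12 arrows $2_2\to1_2$, $1_2\to2_1$, $3_1\to2_1$, $2_2\to3_1$, $4_1\to3_1$, $3_1\to4_0$, $5_0\to4_0$, $4_1\to5_0$, $2_1\to1_1$, $2_1\to3_0$, $4_0\to3_0$, $4_0\to5_{-1}$, and let $P=\{(2_2,2_1),(4_1,4_0),(1_2,1_1),(3_1,3_0),(5_0,5_{-1})\}$. The Ringel form (of the tubular algebra $\Delta$ of type $(6,3,2)$) is $\langle d,e\rangle=\sum_{v\in V}d_ve_v-\sum_{(v\to w)\in A}d_ve_w+\sum_{(v,w)\in P}d_ve_w$. Write $\langle d,e\rangle=d^{t}Ee$ and let $\Phi=-E^{-1}E^{t}$ (Coxeter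 matrix; $\Phi$ is integral with $\Phi^6=\mathrm{id}$). Let $q(d)=\langle d,d\rangle$ and $R=\{d\in\mathbb Z^{10}\setminus\{0\}: q(d)\in\{0,1\}\}$; $d\in R$ is real if $q(d)=1$, imaginary if $q(d)=0$. Let $h_0$ have entries $h_0(1_1,1_2,2_1,2_2,3_0,3_1,4_0,4_1,5_{-1},5_0)=(1,1,3,0,2,2,3,0,1,1)$ and $h_\infty$ entries $(0,1,1,1,0,2,1,1,0,1)$ in the same order; put $h_{a,b}=ah_0+bh_\infty$. $R^+=\{d\in R: \langle d,h_\infty\rangle>0\text{ or }(\langle d,h_\infty\rangle=0\text{ and }\langle h_0,d\rangle>0)\}$. For $d\in R^+$ its slope is $\langle h_0,d\rangle/\langle d,h_\infty\rangle\in\mathbb Q\cup\{\infty\}$ and $R^\lambda$ is the set of positive roots of slope $\lambda$. The rank $\operatorname{rk}(d)$ is the least $m\ge1$ with $\Phi^m(d)=d$; $h(d)=\sum_{j=1}^{\operatorname{rk}(d)}\Phi^j(d)$; the quasi-length $\operatorname{ql}(d)$ is the gcd of the entries of $h(d)$. $R^\lambda_\ell(i)=\{d\in R^\lambda:\operatorname{rk}(d)=i,\ \operatorname{ql}(d)=\ell\}$. *)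

theory Defs
  imports Complex_Main "HOL-Library.Function_Algebras"
begin

text \<open>Vertices of the quiver of the tubular algebra of type (6,3,2).
  Constructor vI_J stands for the vertex I_J; vI_m1 stands for I_{-1}.\<close>
datatype vtx = v1_1 | v1_2 | v2_1 | v2_2 | v3_0 | v3_1 | v4_0 | v4_1 | v5_m1 | v5_0

lemma UNIV_vtx: "(UNIV :: vtx set) = {v1_1, v1_2, v2_1, v2_2, v3_0, v3_1, v4_0, v4_1, v5_m1, v5_0}"
  by (auto intro: vtx.exhaust)

instance vtx :: finite
  by standard (simp add: UNIV_vtx)

type_synonym dimvec = "vtx \<Rightarrow> int"

definition arrows :: "(vtx \<times> vtx) set" where
  "arrows = {(v2_2, v1_2), (v1_2, v2_1), (v3_1, v2_1), (v2_2, v3_1), (v4_1, v3_1), (v3_1, v4_0),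
             (v5_0, v4_0), (v4_1, v5_0), (v2_1, v1_1), (v2_1, v3_0), (v4_0, v3_0), (v4_0, v5_m1)}"

definition relpairs :: "(vtx \<times> vtx) set" where
  "relpairs = {(v2_2, v2_1), (v4_1, v4_0), (v1_2, v1_1), (v3_1, v3_0), (v5_0, v5_m1)}"

definition Emat :: "vtx \<Rightarrow> vtx \<Rightarrow> int" where
  "Emat v w = (if v = w then 1 else 0) - (if (v, w) \<in> arrows then 1 else 0)
              + (if (v, w) \<in> relpairs then 1 else 0)"

definition ringel :: "dimvec \<Rightarrow> dimvec \<Rightarrow> int" where
  "ringel d e = (\<Sum>v\<in>UNIV. \<Sum>w\<in>UNIV. d v * Emat v w * e w)"

text \<open>Coxeter transformation Phi = - E^{-1} E^t, i.e. Phi d is the (integral) vector x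
  with E x = - E^t d.\<close>
definition Phi :: "dimvec \<Rightarrow> dimvec" where
  "Phi d = (THE x. \<forall>v. (\<Sum>w\<in>UNIV. Emat v w * x w) = - (\<Sum>w\<in>UNIV. Emat w v * d w))"

definition qform :: "dimvec \<Rightarrow> int" where
  "qform d = ringel d d"

definition roots :: "dimvec set" where
  "roots = {d. d \<noteq> 0 \<and> qform d \<in> {0, 1}}"

definition h0 :: dimvec where
  "h0 v = (case v of v1_1 \<Rightarrow> 1 | v1_2 \<Rightarrow> 1 | v2_1 \<Rightarrow> 3 | v2_2 \<Rightarrow> 0 | v3_0 \<Rightarrow> 2
                    | v3_1 \<Rightarrow> 2 | v4_0 \<Rightarrow> 3 | v4_1 \<Rightarrow> 0 | v5_m1 \<Rightarrow> 1 | v5_0 \<Rightarrow> 1)"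

definition hinf :: dimvec where
  "hinf v = (case v of v1_1 \<Rightarrow> 0 | v1_2 \<Rightarrow> 1 | v2_1 \<Rightarrow> 1 | v2_2 \<Rightarrow> 1 | v3_0 \<Rightarrow> 0
                    | v3_1 \<Rightarrow> 2 | v4_0 \<Rightarrow> 1 | v4_1 \<Rightarrow> 1 | v5_m1 \<Rightarrow> 0 | v5_0 \<Rightarrow> 1)"

definition hab :: "int \<Rightarrow> int \<Rightarrow> dimvec" where
  "hab a b = (\<lambda>v. a * h0 v + b * hinf v)"

definition pos_roots :: "dimvec set" where
  "pos_roots = {d \<in> roots. ringel d hinf > 0 \<or> (ringel d hinf = 0 \<and> ringel h0 d > 0)}"

text \<open>Slopes in Q \<union> {\<infinity>}: None represents \<infinity>.\<close>
definition slope :: "dimvec \<Rightarrow> rat option" where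
  "slope d = (if ringel d hinf = 0 then None
              else Some (of_int (ringel h0 d) / of_int (ringel d hinf)))"

definition roots_slope :: "rat option \<Rightarrow> dimvec set" where
  "roots_slope lam = {d \<in> pos_roots. slope d = lam}"

definition rk :: "dimvec \<Rightarrow> nat" where
  "rk d = (LEAST m. m \<ge> 1 \<and> (Phi ^^ m) d = d)"

definition hsum :: "dimvec \<Rightarrow> dimvec" where
  "hsum d = (\<Sum>j = 1..rk d. (Phi ^^ j) d)"

definition ql :: "dimvec \<Rightarrow> int" where
  "ql d = Gcd (range (hsum d))"

definition Rset :: "rat option \<Rightarrow> int \<Rightarrow> nat \<Rightarrow> dimvec set" where
  "Rset lam l i = {d \<in> roots_slope lam. rk d = i \<and> ql d = l}"

end

theory Submission
  imports Defs
begin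

text \<open>The radical of q is spanned by h_0 and h_inf, both fixed by Phi.  Adding h_{a,b} to d
  preserves q and the rank and shifts (<d, h_inf>, <h_0, d>) by (6a, 6b).  As Phi fixes h(d), the
  vector h(d) is radical, whence 6 ql(d) = rk(d) gcd(<d, h_inf>, <h_0, d>); so R^lam_l(i) is the set
  of roots of rank i with one prescribed pair (<d, h_inf>, <h_0, d>).  Subtracting the radical
  part, every vector becomes one vanishing at 1_1 and 2_2; there 8 q is a sum of eight squares,
  so such imaginary roots do not exist and the real ones can be listed.  Counting the listed
  roots of rank i with prescribed residues mod 6 gives (b) and (c); the Phi-orbit of d has rk(d)
  elements, which gives (a); and the roots of rank one are radical, which gives (d).\<close>

section \<open>The Ringel form and the Coxeter transformation\<close>

lemma sum_UNIV_vtx: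
  "(\<Sum>v\<in>UNIV. f v) = f v1_1 + f v1_2 + f v2_1 + f v2_2 + f v3_0 + f v3_1 + f v4_0 + f v4_1
     + f v5_m1 + (f v5_0 :: 'a :: comm_monoid_add)"
  by (simp add: UNIV_vtx ac_simps)

lemma ringel_explicit:
  "ringel d e = d v1_1 * e v1_1 + d v1_2 * e v1_1 + d v1_2 * e v1_2 - d v1_2 * e v2_1
     - d v2_1 * e v1_1 + d v2_1 * e v2_1 - d v2_1 * e v3_0 - d v2_2 * e v1_2 + d v2_2 * e v2_1
     + d v2_2 * e v2_2 - d v2_2 * e v3_1 + d v3_0 * e v3_0 - d v3_1 * e v2_1 + d v3_1 * e v3_0
     + d v3_1 * e v3_1 - d v3_1 * e v4_0 - d v4_0 * e v3_0 + d v4_0 * e v4_0 - d v4_0 * e v5_m1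
     - d v4_1 * e v3_1 + d v4_1 * e v4_0 + d v4_1 * e v4_1 - d v4_1 * e v5_0 + d v5_m1 * e v5_m1
     - d v5_0 * e v4_0 + d v5_0 * e v5_m1 + d v5_0 * e v5_0"
  unfolding ringel_def sum_UNIV_vtx Emat_def arrows_def relpairs_def by (simp add: algebra_simps)

lemma ringel_hinf: "ringel d hinf = d v2_1 - d v2_2 + d v4_0 - d v4_1"
  unfolding ringel_explicit hinf_def by simp

lemma ringel_h0: "ringel h0 d = - d v1_1 + d v1_2 - 2 * d v3_0 + 2 * d v3_1 - d v5_m1 + d v5_0"
  unfolding ringel_explicit h0_def by simp

definition coxeter :: "dimvec \<Rightarrow> dimvec" where
  "coxeter d = (\<lambda>v. case v of
       v1_1 \<Rightarrow> - d v1_1 - d v1_2 + d v2_1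
     | v1_2 \<Rightarrow> - d v3_0 + d v4_0
     | v2_1 \<Rightarrow> - d v1_1 + d v2_1 - d v2_2 - d v3_0 + d v4_0
     | v2_2 \<Rightarrow> - d v3_0 + d v4_0 - d v5_m1
     | v3_0 \<Rightarrow> d v2_1 - d v3_0 - d v3_1 + d v4_0
     | v3_1 \<Rightarrow> - d v1_1 + d v2_1 - d v3_0 + d v4_0 - d v5_m1
     | v4_0 \<Rightarrow> d v2_1 - d v3_0 + d v4_0 - d v4_1 - d v5_m1
     | v4_1 \<Rightarrow> - d v1_1 + d v2_1 - d v3_0
     | v5_m1 \<Rightarrow> d v4_0 - d v5_m1 - d v5_0
     | v5_0 \<Rightarrow> d v2_1 - d v3_0)"

lemma sum_Emat_row: "(\<Sum>w\<in>UNIV. Emat v w * x w) = (case v of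
     v1_1 \<Rightarrow> x v1_1
   | v1_2 \<Rightarrow> x v1_1 + x v1_2 - x v2_1
   | v2_1 \<Rightarrow> - x v1_1 + x v2_1 - x v3_0
   | v2_2 \<Rightarrow> - x v1_2 + x v2_1 + x v2_2 - x v3_1
   | v3_0 \<Rightarrow> x v3_0
   | v3_1 \<Rightarrow> - x v2_1 + x v3_0 + x v3_1 - x v4_0
   | v4_0 \<Rightarrow> - x v3_0 + x v4_0 - x v5_m1
   | v4_1 \<Rightarrow> - x v3_1 + x v4_0 + x v4_1 - x v5_0
   | v5_m1 \<Rightarrow> x v5_m1
   | v5_0 \<Rightarrow> - x v4_0 + x v5_m1 + x v5_0)"
  unfolding sum_UNIV_vtx Emat_def arrows_def relpairs_def by (cases v) (simp_all add: algebra_simps)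

lemma sum_Emat_col: "(\<Sum>w\<in>UNIV. Emat w v * x w) = (case v of
     v1_1 \<Rightarrow> x v1_1 + x v1_2 - x v2_1
   | v1_2 \<Rightarrow> x v1_2 - x v2_2
   | v2_1 \<Rightarrow> - x v1_2 + x v2_1 + x v2_2 - x v3_1
   | v2_2 \<Rightarrow> x v2_2
   | v3_0 \<Rightarrow> - x v2_1 + x v3_0 + x v3_1 - x v4_0
   | v3_1 \<Rightarrow> - x v2_2 + x v3_1 - x v4_1
   | v4_0 \<Rightarrow> - x v3_1 + x v4_0 + x v4_1 - x v5_0
   | v4_1 \<Rightarrow> x v4_1
   | v5_m1 \<Rightarrow> - x v4_0 + x v5_m1 + x v5_0
   | v5_0 \<Rightarrow> - x v4_1 + x v5_0)"
  unfolding sum_UNIV_vtx Emat_def arrows_def relpairs_def by (cases v) (simp_all add: algebra_simps)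

text \<open>The quiver has no oriented cycles, so E is unitriangular and the system
  E x = - E^t d has the unique solution coxeter d.\<close>
lemma Phi_eq_coxeter: "Phi d = coxeter d"
  unfolding Phi_def
proof (rule the_equality)
  show "\<forall>v. (\<Sum>w\<in>UNIV. Emat v w * coxeter d w) = - (\<Sum>w\<in>UNIV. Emat w v * d w)"
    unfolding sum_Emat_row sum_Emat_col by (auto simp: coxeter_def split: vtx.split)
next
  fix x
  assume "\<forall>v. (\<Sum>w\<in>UNIV. Emat v w * x w) = - (\<Sum>w\<in>UNIV. Emat w v * d w)"
  then have eq: "(\<Sum>w\<in>UNIV. Emat v w * x w) = - (\<Sum>w\<in>UNIV. Emat w v * d w)" for v
    by blast
  note eqs = eq[of v1_1] eq[of v1_2] eq[of v2_1] eq[of v2_2] eq[of v3_0] eq[of v3_1]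
    eq[of v4_0] eq[of v4_1] eq[of v5_m1] eq[of v5_0]
  show "x = coxeter d"
  proof
    fix v
    show "x v = coxeter d v"
      using eqs unfolding sum_Emat_row sum_Emat_col by (cases v) (simp_all add: coxeter_def)
  qed
qed

lemma Phi_add: "Phi (d + e) = Phi d + Phi e"
  unfolding Phi_eq_coxeter by (rule ext) (simp add: coxeter_def algebra_simps split: vtx.split)

lemma Phi_zero: "Phi 0 = 0"
  unfolding Phi_eq_coxeter by (rule ext) (simp add: coxeter_def split: vtx.split)

lemma Phi_sum: "Phi (\<Sum>j\<in>A. f j) = (\<Sum>j\<in>A. Phi (f j))"
proof (induction A rule: infinite_finite_induct)
  case (infinite A)
  then show ?case
    by (metis Phi_zero sum.infinite)
next
  case empty
  then show ?case
    by (metis Phi_zero sum.empty)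
next
  case (insert x F)
  have "Phi (\<Sum>j\<in>insert x F. f j) = Phi (f x) + Phi (\<Sum>j\<in>F. f j)"
    using insert.hyps by (simp add: Phi_add[symmetric])
  then show ?case
    by (simp only: sum.insert[OF insert.hyps] insert.IH)
qed

lemma sum_fun_apply: "(\<Sum>j\<in>A. f j) x = (\<Sum>j\<in>A. f j x :: 'b :: comm_monoid_add)"
  by (induction A rule: infinite_finite_induct) simp_all

lemma ringel_sum_left: "ringel (\<Sum>j\<in>A. f j) e = (\<Sum>j\<in>A. ringel (f j) e)"
  unfolding ringel_def sum_fun_apply by (simp add: sum_distrib_right sum.swap[of _ A])

lemma ringel_sum_right: "ringel d (\<Sum>j\<in>A. f j) = (\<Sum>j\<in>A. ringel d (f j))"
  unfolding ringel_def sum_fun_apply by (simp add: sum_distrib_left sum.swap[of _ A])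

lemma ringel_Phi_hinf: "ringel (Phi d) hinf = ringel d hinf"
  unfolding ringel_hinf Phi_eq_coxeter coxeter_def by simp

lemma ringel_h0_Phi: "ringel h0 (Phi d) = ringel h0 d"
  unfolding ringel_h0 Phi_eq_coxeter coxeter_def by simp

lemma qform_Phi: "qform (Phi d) = qform d"
  unfolding qform_def ringel_explicit Phi_eq_coxeter coxeter_def by (simp add: algebra_simps)

lemma hab_v1_1 [simp]: "hab a b v1_1 = a"
  and hab_v2_2 [simp]: "hab a b v2_2 = b"
  by (simp_all add: hab_def h0_def hinf_def)

lemma hab_add: "hab (a + a') (b + b') = hab a b + hab a' b'"
  by (simp add: hab_def fun_eq_iff algebra_simps)

lemma Phi_hab: "Phi (hab a b) = hab a b"
  unfolding Phi_eq_coxeter by (rule ext) (simp add: coxeter_def hab_def h0_def hinf_def split: vtx.split)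

lemma qform_add_hab: "qform (d + hab a b) = qform d"
  unfolding qform_def ringel_explicit by (simp add: hab_def h0_def hinf_def algebra_simps)

lemma qform_zero: "qform 0 = 0"
  by (simp add: qform_def ringel_def)

lemma ringel_add_hab_hinf: "ringel (d + hab a b) hinf = ringel d hinf + 6 * a"
  unfolding ringel_hinf by (simp add: hab_def h0_def hinf_def)

lemma ringel_h0_add_hab: "ringel h0 (d + hab a b) = ringel h0 d + 6 * b"
  unfolding ringel_h0 by (simp add: hab_def h0_def hinf_def)

lemma ringel_hab_hinf: "ringel (hab a b) hinf = 6 * a"
  and ringel_h0_hab: "ringel h0 (hab a b) = 6 * b"
  using ringel_add_hab_hinf[of 0] ringel_h0_add_hab[of 0] by (simp_all add: ringel_hinf ringel_h0)

lemma Phi_fixed_imp_hab: "Phi e = e \<Longrightarrow> e = hab (e v1_1) (e v2_2)"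
proof -
  assume "Phi e = e"
  then have fixed: "coxeter e v = e v" for v
    unfolding Phi_eq_coxeter by simp
  from fixed[of v1_1] fixed[of v1_2] fixed[of v2_1] fixed[of v2_2] fixed[of v3_0] fixed[of v3_1]
    fixed[of v4_0] fixed[of v4_1] fixed[of v5_m1] fixed[of v5_0]
  show ?thesis
    unfolding coxeter_def hab_def h0_def hinf_def by (intro ext) (simp split: vtx.split)
qed

lemma Phi_fixed_eq_hab:
  "Phi d = d \<Longrightarrow> d = hab (ringel d hinf div 6) (ringel h0 d div 6)"
  using Phi_fixed_imp_hab ringel_hab_hinf ringel_h0_hab by (metis nonzero_mult_div_cancel_left zero_neq_numeral)

section \<open>Rank and quasi-length\<close>

text \<open>Phi^3 is the permutation of coordinates induced by the automorphism of the quiver that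
  exchanges its two outer arms.\<close>
lemma Phi_Phi_Phi: "Phi (Phi (Phi d)) = (\<lambda>v. case v of
     v1_1 \<Rightarrow> d v5_m1 | v1_2 \<Rightarrow> d v5_0 | v2_1 \<Rightarrow> d v4_0 | v2_2 \<Rightarrow> d v4_1 | v3_0 \<Rightarrow> d v3_0
   | v3_1 \<Rightarrow> d v3_1 | v4_0 \<Rightarrow> d v2_1 | v4_1 \<Rightarrow> d v2_2 | v5_m1 \<Rightarrow> d v1_1 | v5_0 \<Rightarrow> d v1_2)"
  unfolding Phi_eq_coxeter by (rule ext) (simp add: coxeter_def split: vtx.split)

lemma funpow_Phi_6: "Phi ^^ 6 = id"
proof
  fix d
  have "(Phi ^^ 6) d = Phi (Phi (Phi (Phi (Phi (Phi d)))))"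
    by (simp add: numeral_eq_Suc)
  also have "\<dots> = d"
    unfolding Phi_Phi_Phi by (rule ext) (simp split: vtx.split)
  finally show "(Phi ^^ 6) d = id d" by simp
qed

lemma inj_funpow_if_periodic:
  assumes "f ^^ n = id" and "n > 0"
  shows "inj (f ^^ j)"
proof -
  have "(f ^^ (n * j - j)) \<circ> (f ^^ j) = f ^^ (n * j)"
    using assms(2) by (simp add: funpow_add[symmetric])
  also have "\<dots> = id"
    using assms(1) by (simp add: funpow_mult[symmetric])
  finally show ?thesis
    by (metis inj_on_id inj_on_imageI2)
qed

lemma inj_funpow_Phi: "inj (Phi ^^ j)"
  by (rule inj_funpow_if_periodic[OF funpow_Phi_6]) simp

lemma funpow_Phi_linear:
  "(Phi ^^ m) (d + e) = (Phi ^^ m) d + (Phi ^^ m) e" "(Phi ^^ m) 0 = 0"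
  by (induction m) (simp_all add: Phi_add Phi_zero)

lemma funpow_Phi_hab: "(Phi ^^ m) (hab a b) = hab a b"
  by (induction m) (simp_all add: Phi_hab)

lemma ringel_funpow_Phi_hinf: "ringel ((Phi ^^ m) d) hinf = ringel d hinf"
  and ringel_h0_funpow_Phi: "ringel h0 ((Phi ^^ m) d) = ringel h0 d"
  and qform_funpow_Phi: "qform ((Phi ^^ m) d) = qform d"
  by (induction m) (simp_all add: ringel_Phi_hinf ringel_h0_Phi qform_Phi)

lemma rk_ge_1: "rk d \<ge> 1"
  and funpow_rk: "(Phi ^^ rk d) d = d"
proof -
  have "rk d \<ge> 1 \<and> (Phi ^^ rk d) d = d"
    unfolding rk_def by (rule LeastI[of _ 6]) (simp add: funpow_Phi_6)
  then show "rk d \<ge> 1" "(Phi ^^ rk d) d = d" by auto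
qed

lemma rk_le: "1 \<le> m \<Longrightarrow> (Phi ^^ m) d = d \<Longrightarrow> rk d \<le> m"
  unfolding rk_def by (rule Least_le) simp

lemma rk_le_6: "rk d \<le> 6"
  by (rule rk_le) (simp_all add: funpow_Phi_6)

lemma rk_eq_1_iff: "rk d = 1 \<longleftrightarrow> Phi d = d"
  using funpow_rk[of d] rk_ge_1[of d] rk_le[of 1 d] by auto

lemma rk_cong: "(\<And>m. (Phi ^^ m) d = d \<longleftrightarrow> (Phi ^^ m) e = e) \<Longrightarrow> rk d = rk e"
  unfolding rk_def by simp

lemma rk_add_hab: "rk (d + hab a b) = rk d"
  by (rule rk_cong) (simp add: funpow_Phi_linear funpow_Phi_hab)

lemma rk_funpow_Phi: "rk ((Phi ^^ j) d) = rk d"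
proof (rule rk_cong)
  fix m
  have "(Phi ^^ m) ((Phi ^^ j) d) = (Phi ^^ j) ((Phi ^^ m) d)"
    by (metis comp_apply funpow_add add.commute)
  then show "(Phi ^^ m) ((Phi ^^ j) d) = (Phi ^^ j) d \<longleftrightarrow> (Phi ^^ m) d = d"
    using inj_funpow_Phi[of j] by (simp add: inj_eq)
qed

lemma funpow_Phi_rk_mult: "(Phi ^^ (rk d * q)) d = d"
  by (induction q) (simp_all add: funpow_add funpow_rk)

lemma funpow_Phi_eq_self_iff: "(Phi ^^ m) d = d \<longleftrightarrow> rk d dvd m"
proof
  have "(Phi ^^ m) d = (Phi ^^ (m mod rk d + rk d * (m div rk d))) d"
    by simp
  also have "\<dots> = (Phi ^^ (m mod rk d)) d"
    by (simp only: funpow_add comp_apply funpow_Phi_rk_mult)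
  finally have mod_rk: "(Phi ^^ m) d = (Phi ^^ (m mod rk d)) d" .
  show "rk d dvd m" if "(Phi ^^ m) d = d"
  proof (rule ccontr)
    assume "\<not> rk d dvd m"
    then have "1 \<le> m mod rk d"
      by (simp add: dvd_eq_mod_eq_0 Suc_le_eq)
    then have "rk d \<le> m mod rk d"
      using that mod_rk by (intro rk_le) simp_all
    moreover have "m mod rk d < rk d"
      using rk_ge_1[of d] by simp
    ultimately show False
      by simp
  qed
  show "(Phi ^^ m) d = d" if "rk d dvd m"
    using that funpow_Phi_rk_mult by auto
qed

lemma rk_cases: "rk d \<in> {1, 2, 3, 6}"
proof -
  have "rk d dvd 6"
    using funpow_Phi_eq_self_iff[of 6 d] funpow_Phi_6 by simp
  moreover have "rk d \<in> {1..6}"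
    using rk_ge_1 rk_le_6 by simp
  moreover have "{1..6} = {1, 2, 3, 4, 5, 6 :: nat}"
    by auto
  ultimately show ?thesis
    by auto
qed

lemma inj_on_orbit: "inj_on (\<lambda>j. (Phi ^^ j) d) {1..rk d}"
proof -
  have False if "1 \<le> j" "j < k" "k \<le> rk d" "(Phi ^^ j) d = (Phi ^^ k) d" for j k
  proof -
    have "(Phi ^^ (k - j)) ((Phi ^^ j) d) = (Phi ^^ (k - j + j)) d"
      by (simp add: funpow_add)
    also have "k - j + j = k"
      using that by simp
    finally have "(Phi ^^ (k - j)) ((Phi ^^ j) d) = (Phi ^^ j) d"
      using that(4) by simp
    then have "rk ((Phi ^^ j) d) \<le> k - j"
      using that by (intro rk_le) auto
    then show False
      using that by (simp add: rk_funpow_Phi)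
  qed
  then show ?thesis
    by (intro inj_onI) (metis atLeastAtMost_iff linorder_neqE_nat)
qed

lemma Phi_hsum: "Phi (hsum d) = hsum d"
proof -
  let ?k = "rk d" and ?g = "\<lambda>j. (Phi ^^ j) d"
  have "Phi (hsum d) = (\<Sum>j = 1..?k. ?g (Suc j))"
    unfolding hsum_def Phi_sum by simp
  also have "\<dots> = (\<Sum>j = Suc 1..Suc ?k. ?g j)"
    by (rule sum.shift_bounds_cl_Suc_ivl[symmetric])
  also have "\<dots> = (\<Sum>j = 1..Suc ?k. ?g j) - ?g 1"
    using rk_ge_1[of d] by (simp add: sum.atLeast_Suc_atMost)
  also have "\<dots> = (\<Sum>j = 1..?k. ?g j) + ?g (Suc ?k) - ?g 1"
    using rk_ge_1[of d] by (simp add: sum.cl_ivl_Suc)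
  also have "?g (Suc ?k) = ?g 1"
    using funpow_rk[of d] by simp
  finally show ?thesis
    unfolding hsum_def by simp
qed

lemma six_times_hsum:
  "6 * hsum d v1_1 = int (rk d) * ringel d hinf" "6 * hsum d v2_2 = int (rk d) * ringel h0 d"
proof -
  have h: "hsum d = hab (hsum d v1_1) (hsum d v2_2)"
    by (rule Phi_fixed_imp_hab[OF Phi_hsum])
  have "ringel (hsum d) hinf = int (rk d) * ringel d hinf"
    unfolding hsum_def ringel_sum_left ringel_funpow_Phi_hinf by simp
  then show "6 * hsum d v1_1 = int (rk d) * ringel d hinf"
    using ringel_hab_hinf h by metis
  have "ringel h0 (hsum d) = int (rk d) * ringel h0 d"
    unfolding hsum_def ringel_sum_right ringel_h0_funpow_Phi by simp
  then show "6 * hsum d v2_2 = int (rk d) * ringel h0 d"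
    using ringel_h0_hab h by metis
qed

lemma Gcd_eq_gcd_if_members:
  fixes A :: "'a :: semiring_Gcd set"
  assumes "a \<in> A" "b \<in> A" "\<And>x. x \<in> A \<Longrightarrow> gcd a b dvd x"
  shows "Gcd A = gcd a b"
proof (rule associated_eqI)
  show "Gcd A dvd gcd a b"
    using assms(1,2) by (simp add: Gcd_dvd)
  show "gcd a b dvd Gcd A"
    using assms(3) by (simp add: Gcd_greatest)
qed simp_all

lemma Gcd_range_hab: "Gcd (range (hab a b)) = gcd a b"
proof (rule Gcd_eq_gcd_if_members)
  show "a \<in> range (hab a b)" "b \<in> range (hab a b)"
    using hab_v1_1 hab_v2_2 by (metis rangeI)+
  show "gcd a b dvd x" if "x \<in> range (hab a b)" for x
    using that by (auto simp: hab_def)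
qed

lemma six_times_ql: "6 * ql d = int (rk d) * gcd (ringel d hinf) (ringel h0 d)"
proof -
  have "ql d = gcd (hsum d v1_1) (hsum d v2_2)"
    unfolding ql_def by (subst Phi_fixed_imp_hab[OF Phi_hsum]) (rule Gcd_range_hab)
  then have "6 * ql d = gcd (6 * hsum d v1_1) (6 * hsum d v2_2)"
    by (simp add: gcd_mult_left)
  also have "\<dots> = int (rk d) * gcd (ringel d hinf) (ringel h0 d)"
    unfolding six_times_hsum by (simp add: gcd_mult_left)
  finally show ?thesis .
qed

section \<open>Reduction modulo the radical\<close>

definition reduce :: "dimvec \<Rightarrow> dimvec" where
  "reduce d = d - hab (d v1_1) (d v2_2)"

lemma reduce_v1_1 [simp]: "reduce d v1_1 = 0"
  and reduce_v2_2 [simp]: "reduce d v2_2 = 0"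
  by (simp_all add: reduce_def)

lemma reduce_plus_hab: "reduce d + hab (d v1_1) (d v2_2) = d"
  by (simp add: reduce_def)

lemma reduce_add_hab: "reduce (d + hab a b) = reduce d"
  by (simp add: reduce_def hab_add)

lemma reduce_eq_self: "d v1_1 = 0 \<Longrightarrow> d v2_2 = 0 \<Longrightarrow> reduce d = d"
  by (rule ext) (simp add: reduce_def hab_def)

lemma qform_reduce: "qform (reduce d) = qform d"
  by (metis qform_add_hab reduce_plus_hab)

lemma ringel_reduce_hinf: "ringel (reduce d) hinf = ringel d hinf - 6 * d v1_1"
  and ringel_h0_reduce: "ringel h0 (reduce d) = ringel h0 d - 6 * d v2_2"
  by (metis add_diff_cancel ringel_add_hab_hinf ringel_h0_add_hab reduce_plus_hab)+

lemma bij_betw_reduce: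
  assumes P_hab: "\<And>d a b. P (d + hab a b) \<longleftrightarrow> P d"
  shows "bij_betw reduce {d. P d \<and> ringel d hinf = x \<and> ringel h0 d = y}
    {r. r v1_1 = 0 \<and> r v2_2 = 0 \<and> P r \<and> ringel r hinf mod 6 = x mod 6 \<and> ringel h0 r mod 6 = y mod 6}"
proof (rule bij_betw_imageI)
  have P_reduce: "P (reduce d) \<longleftrightarrow> P d" for d
    by (metis P_hab reduce_plus_hab)
  show "inj_on reduce {d. P d \<and> ringel d hinf = x \<and> ringel h0 d = y}"
  proof (rule inj_onI)
    fix d e
    assume "d \<in> {d. P d \<and> ringel d hinf = x \<and> ringel h0 d = y}"
      and "e \<in> {d. P d \<and> ringel d hinf = x \<and> ringel h0 d = y}" and red: "reduce d = reduce e"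
    then have "d v1_1 = e v1_1" "d v2_2 = e v2_2"
      using ringel_reduce_hinf[of d] ringel_reduce_hinf[of e] ringel_h0_reduce[of d] ringel_h0_reduce[of e]
      by simp_all
    then show "d = e"
      using red reduce_plus_hab by metis
  qed
  show "reduce ` {d. P d \<and> ringel d hinf = x \<and> ringel h0 d = y} =
    {r. r v1_1 = 0 \<and> r v2_2 = 0 \<and> P r \<and> ringel r hinf mod 6 = x mod 6 \<and> ringel h0 r mod 6 = y mod 6}"
  proof (intro equalityI subsetI)
    fix r
    assume "r \<in> reduce ` {d. P d \<and> ringel d hinf = x \<and> ringel h0 d = y}"
    moreover have "(z - 6 * w) mod 6 = z mod 6" for z w :: int
      by (simp add: mod_eq_dvd_iff)
    ultimately show "r \<in> {r. r v1_1 = 0 \<and> r v2_2 = 0 \<and> P r \<and> ringel r hinf mod 6 = x mod 6 \<and> ringel h0 r mod 6 = y mod 6}"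
      by (auto simp: P_reduce ringel_reduce_hinf ringel_h0_reduce)
  next
    fix r
    assume r: "r \<in> {r. r v1_1 = 0 \<and> r v2_2 = 0 \<and> P r \<and> ringel r hinf mod 6 = x mod 6 \<and> ringel h0 r mod 6 = y mod 6}"
    define d where "d = r + hab ((x - ringel r hinf) div 6) ((y - ringel h0 r) div 6)"
    have "x mod 6 = ringel r hinf mod 6" "y mod 6 = ringel h0 r mod 6"
      using r by simp_all
    then have "6 dvd x - ringel r hinf" "6 dvd y - ringel h0 r"
      by (simp_all only: mod_eq_dvd_iff)
    then have "P d \<and> ringel d hinf = x \<and> ringel h0 d = y"
      using r by (simp add: d_def P_hab ringel_add_hab_hinf ringel_h0_add_hab)
    moreover have "reduce d = r"
      using r by (simp add: d_def reduce_add_hab reduce_eq_self)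
    ultimately show "r \<in> reduce ` {d. P d \<and> ringel d hinf = x \<and> ringel h0 d = y}"
      by blast
  qed
qed

section \<open>The E8 lattice of reduced vectors\<close>

text \<open>On vectors vanishing at 1_1 and 2_2 (a complement of the radical) 8 q is the sum of the
  squares of these eight integer linear forms, which all have the same parity: this is the E8
  lattice scaled by 2, whose 240 roots are its vectors of norm 8.\<close>
definition e8_coords :: "dimvec \<Rightarrow> int list" where
  "e8_coords d =
    [- d v3_0 + 2 * d v4_0 + d v4_1 - 2 * d v5_m1 - 2 * d v5_0,
     - d v3_0 - 2 * d v3_1 + 2 * d v4_0 + d v4_1,
     - d v3_0 - d v4_1 + 2 * d v5_0,
     - d v3_0 + d v4_1 + 2 * d v5_m1,
     - 2 * d v2_1 + d v3_0 + 2 * d v3_1 - d v4_1,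
     - 2 * d v1_2 + 2 * d v2_1 - d v3_0 - d v4_1,
     2 * d v1_2 - d v3_0 - d v4_1,
     d v3_0 + d v4_1]"

text \<open>Four times the inverse of e8_coords on vectors vanishing at 1_1 and 2_2.\<close>
definition e8_preimage4 :: "int list \<Rightarrow> int list" where
  "e8_preimage4 w =
    [2 * w!6 + 2 * w!7,
     2 * w!5 + 2 * w!6 + 4 * w!7,
     - w!0 + w!1 - w!2 - w!3 + w!4 + w!5 + w!6 + 3 * w!7,
     w!0 - w!1 + w!2 + w!3 + w!4 + w!5 + w!6 + 3 * w!7,
     2 * w!1 + 2 * w!4 + 2 * w!5 + 2 * w!6 + 4 * w!7,
     w!0 - w!1 + w!2 + w!3 - w!4 - w!5 - w!6 + w!7,
     - w!0 + w!1 - w!2 + w!3 + w!4 + w!5 + w!6 + w!7,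
     2 * w!2 + 2 * w!7]"

definition e8_realizable :: "int list \<Rightarrow> bool" where
  "e8_realizable w \<longleftrightarrow> (\<forall>z \<in> set (e8_preimage4 w). 4 dvd z)"

definition e8_decode :: "int list \<Rightarrow> int list" where
  "e8_decode w = (let m = map (\<lambda>z. z div 4) (e8_preimage4 w)
     in [0, m!0, m!1, 0, m!2, m!3, m!4, m!5, m!6, m!7])"

definition vtx_list :: "vtx list" where
  "vtx_list = [v1_1, v1_2, v2_1, v2_2, v3_0, v3_1, v4_0, v4_1, v5_m1, v5_0]"

definition to_list :: "dimvec \<Rightarrow> int list" where
  "to_list d = map d vtx_list"

definition of_list :: "int list \<Rightarrow> dimvec" where
  "of_list xs = (\<lambda>v. case v of v1_1 \<Rightarrow> xs!0 | v1_2 \<Rightarrow> xs!1 | v2_1 \<Rightarrow> xs!2 | v2_2 \<Rightarrow> xs!3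
     | v3_0 \<Rightarrow> xs!4 | v3_1 \<Rightarrow> xs!5 | v4_0 \<Rightarrow> xs!6 | v4_1 \<Rightarrow> xs!7 | v5_m1 \<Rightarrow> xs!8 | v5_0 \<Rightarrow> xs!9)"

fun sign_vectors :: "nat \<Rightarrow> int list list" where
  "sign_vectors 0 = [[]]"
| "sign_vectors (Suc n) = map ((#) 1) (sign_vectors n) @ map ((#) (-1)) (sign_vectors n)"

fun unit_vectors :: "nat \<Rightarrow> int list list" where
  "unit_vectors 0 = []"
| "unit_vectors (Suc n) = [1 # replicate n 0, (-1) # replicate n 0] @ map ((#) 0) (unit_vectors n)"

fun norm2_vectors :: "nat \<Rightarrow> int list list" where
  "norm2_vectors 0 = []"
| "norm2_vectors (Suc n) = map ((#) 1) (unit_vectors n) @ map ((#) (-1)) (unit_vectors n)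
     @ map ((#) 0) (norm2_vectors n)"

definition e8_candidates :: "int list list" where
  "e8_candidates = map (map ((*) 2)) (norm2_vectors 8) @ sign_vectors 8"

definition reduced_real_roots :: "int list list" where
  "reduced_real_roots = map e8_decode (filter e8_realizable e8_candidates)"

lemma of_list_to_list [simp]: "of_list (to_list d) = d"
  unfolding to_list_def vtx_list_def of_list_def by (rule ext) (simp split: vtx.split)

lemma to_list_of_list: "length xs = 10 \<Longrightarrow> to_list (of_list xs) = xs"
  unfolding to_list_def vtx_list_def of_list_def
  by (simp add: list_eq_iff_nth_eq numeral_eq_Suc nth_Cons' less_Suc_eq)

lemma to_list_inject: "to_list d = to_list e \<longleftrightarrow> d = e"
  by (metis of_list_to_list)

lemma length_e8_coords: "length (e8_coords d) = 8"
  by (simp add: e8_coords_def)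

lemma sum_squares_e8_coords:
  "d v1_1 = 0 \<Longrightarrow> d v2_2 = 0 \<Longrightarrow> (\<Sum>x\<leftarrow>e8_coords d. x\<^sup>2) = 8 * qform d"
  unfolding e8_coords_def qform_def ringel_explicit by (simp add: algebra_simps power2_eq_square)

lemma e8_coords_parity: "x \<in> set (e8_coords d) \<Longrightarrow> even x \<longleftrightarrow> even (d v3_0 + d v4_1)"
  unfolding e8_coords_def by auto

lemma e8_decode_e8_coords:
  assumes "d v1_1 = 0" "d v2_2 = 0"
  shows "e8_realizable (e8_coords d)" "e8_decode (e8_coords d) = to_list d"
proof -
  have "e8_preimage4 (e8_coords d) = map (\<lambda>v. 4 * d v) [v1_2, v2_1, v3_0, v3_1, v4_0, v4_1, v5_m1, v5_0]"
    unfolding e8_preimage4_def e8_coords_def by (simp add: algebra_simps)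
  then show "e8_realizable (e8_coords d)" "e8_decode (e8_coords d) = to_list d"
    using assms by (simp_all add: e8_realizable_def e8_decode_def to_list_def vtx_list_def)
qed

lemma int_square_le_2: "(x :: int)\<^sup>2 \<le> 2 \<Longrightarrow> x \<in> {-1, 0, 1}"
proof -
  assume "x\<^sup>2 \<le> 2"
  moreover have "\<bar>x\<bar> \<ge> 2 \<Longrightarrow> 4 \<le> x\<^sup>2"
    using power_mono[of 2 "\<bar>x\<bar>" 2] by simp
  ultimately show ?thesis
    by (cases "\<bar>x\<bar> \<ge> 2") auto
qed

lemma sum_squares_nonneg: "0 \<le> (\<Sum>x\<leftarrow>xs. (x :: int)\<^sup>2)"
  by (rule sum_list_nonneg) auto

lemma sum_squares_eq_0: "(\<Sum>x\<leftarrow>xs. (x :: int)\<^sup>2) = 0 \<Longrightarrow> xs = replicate (length xs) 0"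
  by (induction xs) (auto simp: add_nonneg_eq_0_iff sum_squares_nonneg)

lemma sum_squares_eq_1:
  "(\<Sum>x\<leftarrow>xs. (x :: int)\<^sup>2) = 1 \<Longrightarrow> xs \<in> set (unit_vectors (length xs))"
proof (induction xs)
  case (Cons x xs)
  have "x \<in> {-1, 0, 1}"
    using Cons.prems sum_squares_nonneg[of xs] by (intro int_square_le_2) simp
  then show ?case
    using Cons sum_squares_eq_0[of xs] by auto
qed simp

lemma sum_squares_eq_2:
  "(\<Sum>x\<leftarrow>xs. (x :: int)\<^sup>2) = 2 \<Longrightarrow> xs \<in> set (norm2_vectors (length xs))"
proof (induction xs)
  case (Cons x xs)
  have "x \<in> {-1, 0, 1}"
    using Cons.prems sum_squares_nonneg[of xs] by (intro int_square_le_2) simp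
  then show ?case
    using Cons sum_squares_eq_1[of xs] by auto
qed simp

lemma sum_squares_odd_ge_length:
  "\<forall>x \<in> set xs. odd (x :: int) \<Longrightarrow> int (length xs) \<le> (\<Sum>x\<leftarrow>xs. x\<^sup>2)"
proof (induction xs)
  case (Cons x xs)
  then have "1 \<le> x\<^sup>2"
    by (cases "x = 0") (auto simp: int_one_le_iff_zero_less)
  then show ?case
    using Cons by simp
qed simp

lemma sum_squares_odd_eq_length:
  "\<forall>x \<in> set xs. odd (x :: int) \<Longrightarrow> (\<Sum>x\<leftarrow>xs. x\<^sup>2) = int (length xs)
    \<Longrightarrow> xs \<in> set (sign_vectors (length xs))"
proof (induction xs)
  case (Cons x xs)
  have "1 \<le> x\<^sup>2"
    using Cons.prems(1) by (cases "x = 0") (auto simp: int_one_le_iff_zero_less)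
  moreover have "int (length xs) \<le> (\<Sum>x\<leftarrow>xs. x\<^sup>2)"
    using Cons.prems(1) by (simp add: sum_squares_odd_ge_length)
  ultimately have "x\<^sup>2 = 1" "(\<Sum>x\<leftarrow>xs. x\<^sup>2) = int (length xs)"
    using Cons.prems(2) by auto
  moreover from this(1) have "x \<in> {-1, 1}"
    using int_square_le_2[of x] by auto
  ultimately show ?case
    using Cons by auto
qed simp

lemma e8_coords_mem_candidates:
  assumes "d v1_1 = 0" "d v2_2 = 0" "qform d = 1"
  shows "e8_coords d \<in> set e8_candidates"
proof (cases "even (d v3_0 + d v4_1)")
  case True
  define z where "z = map (\<lambda>x. x div 2) (e8_coords d)"
  have w: "e8_coords d = map ((*) 2) z"
    unfolding z_def using True e8_coords_parity[of _ d] by (simp add: map_idI)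
  have "4 * (\<Sum>x\<leftarrow>z. x\<^sup>2) = 8"
    using sum_squares_e8_coords[OF assms(1,2)] assms(3)
    unfolding w by (simp add: sum_list_const_mult[symmetric] power_mult_distrib o_def)
  then have "z \<in> set (norm2_vectors 8)"
    using sum_squares_eq_2[of z] length_e8_coords[of d] w by simp
  then show ?thesis
    unfolding e8_candidates_def w by simp
next
  case False
  then have "\<forall>x \<in> set (e8_coords d). odd x"
    using e8_coords_parity by blast
  then have "e8_coords d \<in> set (sign_vectors 8)"
    using sum_squares_odd_eq_length[of "e8_coords d"] sum_squares_e8_coords[OF assms(1,2)] assms(3)
    by (simp add: length_e8_coords)
  then show ?thesis
    unfolding e8_candidates_def by simp
qed

lemma to_list_mem_reduced_real_roots:
  "d v1_1 = 0 \<Longrightarrow> d v2_2 = 0 \<Longrightarrow> qform d = 1 \<Longrightarrow> to_list d \<in> set reduced_real_roots"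
proof -
  assume d: "d v1_1 = 0" "d v2_2 = 0" "qform d = 1"
  then have "e8_coords d \<in> set (filter e8_realizable e8_candidates)"
    by (simp add: e8_coords_mem_candidates e8_decode_e8_coords)
  then show ?thesis
    unfolding reduced_real_roots_def using e8_decode_e8_coords(2)[OF d(1,2)] by (metis image_eqI set_map)
qed

lemma reduced_imaginary_eq_0:
  assumes "d v1_1 = 0" "d v2_2 = 0" "qform d = 0"
  shows "d = 0"
proof -
  have "(\<Sum>x\<leftarrow>e8_coords d. x\<^sup>2) = 0"
    using sum_squares_e8_coords[OF assms(1,2)] assms(3) by simp
  then have "e8_coords d = replicate 8 0"
    using sum_squares_eq_0[of "e8_coords d"] by (simp add: length_e8_coords)
  then have "to_list d = e8_decode (replicate 8 0)"
    using e8_decode_e8_coords(2)[OF assms(1,2)] by simp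
  also have "\<dots> = to_list 0"
    by (simp add: e8_decode_def e8_preimage4_def to_list_def vtx_list_def numeral_eq_Suc)
  finally show "d = 0"
    by (metis of_list_to_list)
qed

lemma qform_eq_0_imp_Phi_fixed: "qform d = 0 \<Longrightarrow> Phi d = d"
proof -
  assume "qform d = 0"
  then have "reduce d = 0"
    by (intro reduced_imaginary_eq_0) (simp_all add: qform_reduce)
  then have "d = hab (d v1_1) (d v2_2)"
    using reduce_plus_hab[of d] by simp
  then show "Phi d = d"
    by (metis Phi_hab)
qed

lemma real_if_rk_ne_1: "d \<in> roots \<Longrightarrow> rk d \<noteq> 1 \<Longrightarrow> qform d = 1"
  using qform_eq_0_imp_Phi_fixed rk_eq_1_iff by (auto simp: roots_def)

section \<open>Counting reduced real roots by evaluation\<close>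

definition Phi_list :: "int list \<Rightarrow> int list" where
  "Phi_list xs = to_list (coxeter (of_list xs))"

text \<open>Testing Phi, Phi^2 and Phi^3 suffices because the rank is 1, 2, 3 or 6 (rk_cases).\<close>
definition rk_list :: "int list \<Rightarrow> nat" where
  "rk_list xs = (let p = Phi_list xs; p2 = Phi_list p in
     if p = xs then 1 else if p2 = xs then 2 else if Phi_list p2 = xs then 3 else 6)"

definition class_list :: "int list \<Rightarrow> nat \<times> int \<times> int" where
  "class_list xs = (rk_list xs, ringel (of_list xs) hinf mod 6, ringel h0 (of_list xs) mod 6)"

lemma Phi_list_to_list: "Phi_list (to_list d) = to_list (Phi d)"
  by (simp add: Phi_list_def Phi_eq_coxeter)

lemma rk_list_to_list: "rk_list (to_list d) = rk d"
proof -
  have "Phi d = d \<longleftrightarrow> rk d dvd 1" "Phi (Phi d) = d \<longleftrightarrow> rk d dvd 2"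
    "Phi (Phi (Phi d)) = d \<longleftrightarrow> rk d dvd 3"
    using funpow_Phi_eq_self_iff[of 1 d] funpow_Phi_eq_self_iff[of 2 d] funpow_Phi_eq_self_iff[of 3 d]
    by (simp_all add: numeral_eq_Suc)
  then show ?thesis
    using rk_cases[of d] by (auto simp: rk_list_def Let_def Phi_list_to_list to_list_inject)
qed

lemma class_list_to_list:
  "class_list (to_list d) = (rk d, ringel d hinf mod 6, ringel h0 d mod 6)"
  by (simp add: class_list_def rk_list_to_list)

text \<open>Each root is paired with its class first, so that evaluation computes every class once.\<close>
definition class_members :: "nat \<times> int \<times> int \<Rightarrow> int list list" where
  "class_members c = [xs. (c', xs) \<leftarrow> map (\<lambda>xs. (class_list xs, xs)) reduced_real_roots, c' = c]"

lemma set_class_members: "set (class_members c) = {xs \<in> set reduced_real_roots. class_list xs = c}"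
  by (auto simp: class_members_def)

lemma reduced_real_roots_shape:
  "xs \<in> set reduced_real_roots \<Longrightarrow> length xs = 10 \<and> of_list xs v1_1 = 0 \<and> of_list xs v2_2 = 0"
  by (auto simp: reduced_real_roots_def e8_decode_def of_list_def Let_def)

lemma reduced_real_roots_real: "\<forall>xs \<in> set reduced_real_roots. qform (of_list xs) = 1"
  unfolding qform_def ringel_explicit by code_simp

lemma class_member_counts:
  "\<forall>i \<in> {2, 3, 6}. \<forall>s \<in> set [0..5]. \<forall>t \<in> set [0..5].
     int (6 div i) dvd s \<and> int (6 div i) dvd t
       \<longrightarrow> card (set (class_members (i, s, t))) = (if s = 0 \<and> t = 0 then 0 else i)"
  unfolding class_members_def class_list_def ringel_hinf ringel_h0 by code_simp

lemma card_class_members: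
  assumes "i \<in> {2, 3, 6}" "s \<in> {0..5}" "t \<in> {0..5}" "int (6 div i) dvd s" "int (6 div i) dvd t"
  shows "card (set (class_members (i, s, t))) = (if s = 0 \<and> t = 0 then 0 else i)"
  using class_member_counts assms unfolding set_upto by blast

lemma bij_betw_class_members:
  "bij_betw of_list (set (class_members (i, s, t)))
     {r. r v1_1 = 0 \<and> r v2_2 = 0 \<and> (qform r = 1 \<and> rk r = i)
       \<and> ringel r hinf mod 6 = s \<and> ringel h0 r mod 6 = t}"
proof (rule bij_betw_imageI)
  show "inj_on of_list (set (class_members (i, s, t)))"
    by (rule inj_on_inverseI[of _ to_list]) (simp add: set_class_members reduced_real_roots_shape to_list_of_list)
next
  have "r \<in> of_list ` set (class_members (i, s, t)) \<longleftrightarrow>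
      r v1_1 = 0 \<and> r v2_2 = 0 \<and> (qform r = 1 \<and> rk r = i) \<and> ringel r hinf mod 6 = s \<and> ringel h0 r mod 6 = t"
    for r
  proof
    assume "r \<in> of_list ` set (class_members (i, s, t))"
    then obtain xs where xs: "xs \<in> set reduced_real_roots" "class_list xs = (i, s, t)" and r: "r = of_list xs"
      by (auto simp: set_class_members)
    then have "to_list r = xs"
      by (simp add: reduced_real_roots_shape to_list_of_list)
    then show "r v1_1 = 0 \<and> r v2_2 = 0 \<and> (qform r = 1 \<and> rk r = i) \<and> ringel r hinf mod 6 = s \<and> ringel h0 r mod 6 = t"
      using xs r reduced_real_roots_shape reduced_real_roots_real class_list_to_list[of r] by auto
  next
    assume "r v1_1 = 0 \<and> r v2_2 = 0 \<and> (qform r = 1 \<and> rk r = i) \<and> ringel r hinf mod 6 = s \<and> ringel h0 r mod 6 = t"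
    then have "to_list r \<in> set (class_members (i, s, t))"
      by (simp add: set_class_members to_list_mem_reduced_real_roots class_list_to_list)
    then show "r \<in> of_list ` set (class_members (i, s, t))"
      by (metis image_eqI of_list_to_list)
  qed
  then show "of_list ` set (class_members (i, s, t)) =
      {r. r v1_1 = 0 \<and> r v2_2 = 0 \<and> (qform r = 1 \<and> rk r = i) \<and> ringel r hinf mod 6 = s \<and> ringel h0 r mod 6 = t}"
    by blast
qed

section \<open>The sets R^lam_l(i)\<close>

text \<open>(x, y) stands for (<d, h_inf>, <h_0, d>); by six_times_ql the condition ql d = l
  becomes i gcd(x, y) = 6 l.\<close>
definition admissible :: "rat option \<Rightarrow> int \<Rightarrow> nat \<Rightarrow> int \<Rightarrow> int \<Rightarrow> bool" where
  "admissible lam l i x y \<longleftrightarrow> (x > 0 \<or> (x = 0 \<and> y > 0))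
     \<and> (if x = 0 then None else Some (of_int y / of_int x)) = lam \<and> int i * gcd x y = 6 * l"

lemma mem_Rset_iff:
  "d \<in> Rset lam l i \<longleftrightarrow> d \<in> roots \<and> rk d = i \<and> admissible lam l i (ringel d hinf) (ringel h0 d)"
proof -
  have "ql d = l \<longleftrightarrow> 6 * ql d = 6 * l"
    by simp
  then show ?thesis
    unfolding Rset_def roots_slope_def pos_roots_def slope_def admissible_def
    using six_times_ql[of d] by auto
qed

lemma admissible_unique:
  assumes "i > 0" "admissible lam l i x y" "admissible lam l i x' y'"
  shows "x = x' \<and> y = y'"
proof -
  have "int i * gcd x y = int i * gcd x' y'"
    using assms(2,3) unfolding admissible_def by simp
  then have g: "gcd x y = gcd x' y'"
    using assms(1) by simp
  show ?thesis
  proof (cases "x = 0")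
    case True
    then have "x' = 0"
      using assms(2,3) unfolding admissible_def by (auto split: if_splits)
    then show ?thesis
      using assms(2,3) g True unfolding admissible_def by auto
  next
    case False
    then have x: "x > 0" "x' > 0" "lam = Some (of_int y / of_int x)" "lam = Some (of_int y' / of_int x')"
      using assms(2,3) unfolding admissible_def by (auto split: if_splits)
    then have "(of_int y / of_int x :: rat) = of_int y' / of_int x'"
      by simp
    then have yx: "y * x' = y' * x"
      using x(1,2) by (simp add: frac_eq_eq flip: of_int_mult)
    have "x' * gcd x y = gcd (x' * x) (x' * y)"
      using x(2) gcd_mult_distrib_int[of x' x y] by simp
    also have "\<dots> = gcd (x * x') (x * y')"
      using yx by (simp add: mult.commute)
    also have "\<dots> = x * gcd x y"
      using x(1) g gcd_mult_distrib_int[of x x' y'] by simp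
    finally have "x = x'"
      using x(1) by simp
    then show ?thesis
      using yx x(1) by simp
  qed
qed

lemma admissible_exists:
  assumes "i dvd 6" "l > 0"
  shows "\<exists>x y. admissible lam l i x y"
proof -
  define m where "m = int (6 div i) * l"
  have "i * (6 div i) = 6"
    using assms(1) by simp
  then have "6 div i > 0"
    by (metis mult_0_right neq0_conv zero_neq_numeral)
  then have m: "m > 0" "int i * m = 6 * l"
    using assms \<open>i * (6 div i) = 6\<close> by (auto simp: m_def of_nat_mult[symmetric] simp del: of_nat_mult)
  show ?thesis
  proof (cases lam)
    case None
    then have "admissible lam l i 0 m"
      using m by (simp add: admissible_def)
    then show ?thesis
      by blast
  next
    case (Some r)
    obtain p q where pq: "quotient_of r = (p, q)"
      by fastforce
    have "q > 0" "coprime p q" "r = of_int p / of_int q"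
      using pq quotient_of_denom_pos quotient_of_coprime quotient_of_div by blast+
    then have "admissible lam l i (m * q) (m * p)"
      using Some m by (simp add: admissible_def gcd_mult_left gcd.commute[of q])
    then show ?thesis
      by blast
  qed
qed

lemma admissible_gcd:
  assumes "i dvd 6" "admissible lam l i x y"
  shows "gcd x y = int (6 div i) * l"
proof -
  have "int i * gcd x y = int i * (int (6 div i) * l)"
    using assms by (simp add: admissible_def of_nat_mult[symmetric] del: of_nat_mult)
  moreover have "i \<noteq> 0"
    using assms(1) by (metis dvd_0_left_iff zero_neq_numeral)
  ultimately show ?thesis
    by simp
qed

lemma Rset_eq:
  assumes "i > 0" "admissible lam l i x y"
  shows "Rset lam l i = {d \<in> roots. rk d = i \<and> ringel d hinf = x \<and> ringel h0 d = y}"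
proof (intro set_eqI iffI)
  fix d
  assume "d \<in> Rset lam l i"
  then have "d \<in> roots" "rk d = i" "admissible lam l i (ringel d hinf) (ringel h0 d)"
    by (simp_all add: mem_Rset_iff)
  then show "d \<in> {d \<in> roots. rk d = i \<and> ringel d hinf = x \<and> ringel h0 d = y}"
    using admissible_unique[OF assms(1) _ assms(2)] by simp
next
  fix d
  assume "d \<in> {d \<in> roots. rk d = i \<and> ringel d hinf = x \<and> ringel h0 d = y}"
  then show "d \<in> Rset lam l i"
    using assms(2) by (simp add: mem_Rset_iff)
qed

lemma admissible_residues_dvd:
  assumes "i dvd 6" "admissible lam l i x y"
  shows "int (6 div i) dvd x mod 6" "int (6 div i) dvd y mod 6"
proof -
  have "6 div i dvd (6 :: nat)"
    using assms(1) by (metis dvd_mult_div_cancel dvd_triv_right)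
  then have "int (6 div i) dvd 6" "int (6 div i) dvd gcd x y"
    using admissible_gcd[OF assms] by (metis int_dvd_int_iff of_nat_numeral, simp)
  then show "int (6 div i) dvd x mod 6" "int (6 div i) dvd y mod 6"
    by (auto simp: dvd_mod_iff intro: dvd_trans)
qed

lemma admissible_residues_eq_0_iff:
  assumes "i dvd 6" "admissible lam l i x y"
  shows "x mod 6 = 0 \<and> y mod 6 = 0 \<longleftrightarrow> int i dvd l"
proof -
  have k: "int (6 div i) * int i = 6"
    using assms(1) by (simp flip: of_nat_mult)
  then have "int (6 div i) \<noteq> 0"
    by (metis mult_zero_left zero_neq_numeral)
  then have "6 dvd int (6 div i) * l \<longleftrightarrow> int i dvd l"
    by (simp flip: k)
  then have "6 dvd gcd x y \<longleftrightarrow> int i dvd l"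
    using admissible_gcd[OF assms] by simp
  then show ?thesis
    by (simp flip: dvd_eq_mod_eq_0)
qed

lemma finite_card_Rset:
  assumes "i \<in> {2, 3, 6}" "l > 0"
  shows "finite (Rset lam l i) \<and> card (Rset lam l i) = (if int i dvd l then 0 else i)"
proof -
  have i: "i dvd 6" "i > 0" "i \<noteq> 1"
    using assms(1) by auto
  obtain x y where adm: "admissible lam l i x y"
    using admissible_exists[OF i(1) assms(2), of lam] by (elim exE)
  let ?P = "\<lambda>d. qform d = 1 \<and> rk d = i"
  let ?c = "(i, x mod 6, y mod 6)"
  let ?S = "{r. r v1_1 = 0 \<and> r v2_2 = 0 \<and> ?P r \<and> ringel r hinf mod 6 = x mod 6 \<and> ringel h0 r mod 6 = y mod 6}"
  have "d \<in> roots \<and> rk d = i \<longleftrightarrow> ?P d" for d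
    using real_if_rk_ne_1[of d] i(3) qform_zero by (auto simp: roots_def)
  then have R: "Rset lam l i = {d. ?P d \<and> ringel d hinf = x \<and> ringel h0 d = y}"
    using Rset_eq[OF i(2) adm] by blast
  have reduce_bij: "bij_betw reduce (Rset lam l i) ?S"
    unfolding R by (rule bij_betw_reduce) (simp add: qform_add_hab rk_add_hab)
  have list_bij: "bij_betw of_list (set (class_members ?c)) ?S"
    by (rule bij_betw_class_members)
  have "finite (Rset lam l i)"
    using bij_betw_finite[OF reduce_bij] bij_betw_finite[OF list_bij] by simp
  moreover have "card (Rset lam l i) = card (set (class_members ?c))"
    using bij_betw_same_card[OF reduce_bij] bij_betw_same_card[OF list_bij] by simp
  moreover have "x mod 6 \<in> {0..5}" "y mod 6 \<in> {0..5}"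
    using pos_mod_bound[of 6 x] pos_mod_bound[of 6 y] by auto
  ultimately show ?thesis
    using card_class_members[OF assms(1) _ _ admissible_residues_dvd[OF i(1) adm]]
      admissible_residues_eq_0_iff[OF i(1) adm] by simp
qed

lemma funpow_Phi_mem_Rset: "d \<in> Rset lam l i \<Longrightarrow> (Phi ^^ j) d \<in> Rset lam l i"
proof -
  assume d: "d \<in> Rset lam l i"
  then have "(Phi ^^ j) d \<noteq> (Phi ^^ j) 0"
    using inj_funpow_Phi[of j] by (auto simp: mem_Rset_iff roots_def inj_eq)
  then have "(Phi ^^ j) d \<noteq> 0"
    by (simp add: funpow_Phi_linear(2))
  then show ?thesis
    using d by (simp add: mem_Rset_iff roots_def qform_funpow_Phi rk_funpow_Phi
      ringel_funpow_Phi_hinf ringel_h0_funpow_Phi)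
qed

lemma Rset_1_subsingleton: "d \<in> Rset lam l 1 \<Longrightarrow> e \<in> Rset lam l 1 \<Longrightarrow> d = e"
proof -
  assume "d \<in> Rset lam l 1" "e \<in> Rset lam l 1"
  then have "rk d = 1" "rk e = 1" and adm:
    "admissible lam l 1 (ringel d hinf) (ringel h0 d)" "admissible lam l 1 (ringel e hinf) (ringel h0 e)"
    unfolding mem_Rset_iff by blast+
  then have "Phi d = d" "Phi e = e"
    by (simp_all only: rk_eq_1_iff)
  moreover have "ringel d hinf = ringel e hinf \<and> ringel h0 d = ringel h0 e"
    by (rule admissible_unique[OF _ adm]) simp
  ultimately show "d = e"
    by (metis Phi_fixed_eq_hab)
qed

lemma Rset_1_eq:
  assumes "l > 0"
    and "case lam of None \<Rightarrow> a = 0 \<and> b = l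
           | Some r \<Rightarrow> a > 0 \<and> of_int b / of_int a = r \<and> gcd a b = l"
  shows "Rset lam l 1 = {hab a b}"
proof -
  have "admissible lam l 1 (6 * a) (6 * b)"
    using assms by (cases lam) (auto simp: admissible_def gcd_mult_left)
  moreover have "hab a b \<noteq> 0"
  proof
    assume h: "hab a b = 0"
    have "a = 0" "b = 0"
      using fun_cong[OF h, of v1_1] fun_cong[OF h, of v2_2] by simp_all
    then show False
      using assms by (cases lam) auto
  qed
  moreover have "qform (hab a b) = 0"
    using qform_add_hab[of 0 a b] qform_zero by simp
  moreover have "rk (hab a b) = 1"
    by (simp only: rk_eq_1_iff Phi_hab)
  ultimately have "hab a b \<in> Rset lam l 1"
    by (simp add: mem_Rset_iff roots_def ringel_hab_hinf ringel_h0_hab)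
  then show ?thesis
    using Rset_1_subsingleton by blast
qed

lemma Rset_eq_orbit:
  assumes "i \<in> {1, 2, 3, 6}" "l > 0" "d \<in> Rset lam l i"
  shows "Rset lam l i = (\<lambda>j. (Phi ^^ j) d) ` {1..i}"
proof (cases "i = 1")
  case True
  then have "rk d = 1"
    using assms(3) by (simp add: mem_Rset_iff)
  then have "Phi d = d"
    by (simp only: rk_eq_1_iff)
  then show ?thesis
    using True assms(3) Rset_1_subsingleton by auto
next
  case False
  then have i: "i \<in> {2, 3, 6}"
    using assms(1) by simp
  have orbit: "(\<lambda>j. (Phi ^^ j) d) ` {1..i} \<subseteq> Rset lam l i"
    using funpow_Phi_mem_Rset[OF assms(3)] by blast
  have "card ((\<lambda>j. (Phi ^^ j) d) ` {1..i}) = i"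
    using inj_on_orbit[of d] assms(3) by (simp add: mem_Rset_iff card_image)
  moreover have "finite (Rset lam l i)" "card (Rset lam l i) = i"
    using finite_card_Rset[OF i assms(2), of lam] assms(3) by (auto split: if_splits)
  ultimately show ?thesis
    using card_subset_eq[OF _ orbit] by simp
qed

theorem mainTheorem15:
  fixes lam :: "rat option" and i :: nat and l :: int
  assumes "i \<in> {1, 2, 3, 6}" and "l > 0"
  shows "(\<forall>d \<in> Rset lam l i. Rset lam l i = {(Phi ^^ j) d | j. j \<in> {1..i}})
       \<and> (i > 1 \<and> int i dvd l \<longrightarrow> Rset lam l i = {})
       \<and> (i > 1 \<and> \<not> int i dvd l \<longrightarrow> card (Rset lam l i) = i \<and> (\<forall>d \<in> Rset lam l i. qform d = 1))
       \<and> (\<forall>a b. (case lam of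
                   None \<Rightarrow> a = 0 \<and> b = l
                 | Some r \<Rightarrow> a > 0 \<and> of_int b / of_int a = r \<and> gcd a b = l)
               \<longrightarrow> Rset lam l 1 = {hab a b})"
proof (intro conjI impI allI ballI)
  fix d
  assume "d \<in> Rset lam l i"
  then show "Rset lam l i = {(Phi ^^ j) d | j. j \<in> {1..i}}"
    using Rset_eq_orbit[OF assms] by blast
next
  assume "1 < i \<and> int i dvd l"
  then show "Rset lam l i = {}"
    using finite_card_Rset[of i l lam] assms by auto
next
  assume "1 < i \<and> \<not> int i dvd l"
  then show "card (Rset lam l i) = i"
    using finite_card_Rset[of i l lam] assms by auto
next
  fix d
  assume "1 < i \<and> \<not> int i dvd l" "d \<in> Rset lam l i"
  then show "qform d = 1"
    using real_if_rk_ne_1 by (simp add: mem_Rset_iff)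
next
  fix a b
  assume "case lam of None \<Rightarrow> a = 0 \<and> b = l
            | Some r \<Rightarrow> a > 0 \<and> of_int b / of_int a = r \<and> gcd a b = l"
  then show "Rset lam l 1 = {hab a b}"
    by (rule Rset_1_eq[OF assms(2)])
qed

end
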